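(* Let $n\ge 2$ and let $(G(k))_{k\in\mathbb{N}}$ be a sequence of digraphs on $\mathcal{V}=\{1,\dots,n\}$ with knowledge sets evolving by the flooding update described in the context. Let $\psi(k)=n$ for $k\le\lceil n/2\rceil-1$ and $\psi(k)=n-k$ for $k\ge\lceil n/2\rceil$. If for every $k\in\{0,1,\dots,n-2\}$ the digraph $G(k)$ contains $\psi(k)(k)$, then for every node $i\in\mathcal{V}$ we have $|\mathcal{K}_i(n)|=n$, and $n$ is the smallest nonnegative integer $k$ with $|\mathcal{K}_i(k)|\le k$; hence every node can determine the network size $n$ from the cardinalities of its own knowledge sets by time $k=n$.
   Context: Network: $\mathcal{V}=\{1,\dots,n\}$; node $i$ holds initial data $d_i\in\mathbb{R}$, pairwise distinct. At discrete times $k\in\mathbb{N}$ communication follows digraph $G(k)=(\mathcal{V},\mathcal{E}(k))$; node $i$ sends to $j$ at time $k$ iff $(i,j)\in\mathcal{E}(k)$. Knowledge sets: $\mathcal{K}_i(0)=\{d_i\}$ and $\mathcal{K}_j(k+1)=\mathcal{K}_j(k)\cup\bigcup_{i:(i,j)\in\mathcal{E}(k)}\mathcal{K}_i(k)$. An input-cord to node $i$ at time $k$ is an ordered list $(\mathcal{I}^i_1,\dots,\mathcal{I}^i_m)$ of pairwise distinct nodes of $\mathcal{V}\setminus\{i\}$ with $(\mathcal{I}^i_j,\mathcal{I}^i_{j+1})\in\mathcal{E}(k)$ for $j=1,\dots,m-1$ and $(\mathcal{I}^i_m,i)\in\mathcal{E}(k)$; its cardinality is $m$. It is closed if moreover $(i,\mathcal{I}^i_1)\in\mathcal{E}(k)$.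 For an integer $\chi$, node $i$ is contained in a $\chi(k)$-cycle if it has at time $k$ a closed input-cord of cardinality greater than $\chi-2$; $G(k)$ contains $\chi(k)$ if every node is contained in a $\chi(k)$-cycle. *)

theory Defs
  imports Complex_Main
begin

text \<open>Nodes are the naturals 1..n; a time-varying digraph is E :: nat => (nat * nat) set,
  where (i,j) in E k means node i sends to node j at time k.\<close>

definition nodes :: "nat \<Rightarrow> nat set" where
  "nodes n = {1..n}"

fun know :: "(nat \<Rightarrow> (nat \<times> nat) set) \<Rightarrow> (nat \<Rightarrow> real) \<Rightarrow> nat \<Rightarrow> nat \<Rightarrow> real set" where
  "know E d 0 j = {d j}"
| "know E d (Suc k) j = know E d k j \<union> (\<Union>i\<in>{i. (i, j) \<in> E k}. know E d k i)"

definition input_cord :: "nat \<Rightarrow> (nat \<Rightarrow> (nat \<times> nat) set) \<Rightarrow> nat \<Rightarrow> nat \<Rightarrow> nat list \<Rightarrow> bool" where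
  "input_cord n E k i cs \<longleftrightarrow>
     cs \<noteq> [] \<and> distinct cs \<and> set cs \<subseteq> nodes n - {i} \<and>
     (\<forall>j. Suc j < length cs \<longrightarrow> (cs ! j, cs ! Suc j) \<in> E k) \<and>
     (last cs, i) \<in> E k"

definition closed_input_cord :: "nat \<Rightarrow> (nat \<Rightarrow> (nat \<times> nat) set) \<Rightarrow> nat \<Rightarrow> nat \<Rightarrow> nat list \<Rightarrow> bool" where
  "closed_input_cord n E k i cs \<longleftrightarrow> input_cord n E k i cs \<and> (i, hd cs) \<in> E k"

definition in_cycle :: "nat \<Rightarrow> (nat \<Rightarrow> (nat \<times> nat) set) \<Rightarrow> int \<Rightarrow> nat \<Rightarrow> nat \<Rightarrow> bool" where
  "in_cycle n E chi k i \<longleftrightarrow> (\<exists>cs. closed_input_cord n E k i cs \<and> int (length cs) > chi - 2)"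

definition contains_cycle :: "nat \<Rightarrow> (nat \<Rightarrow> (nat \<times> nat) set) \<Rightarrow> int \<Rightarrow> nat \<Rightarrow> bool" where
  "contains_cycle n E chi k \<longleftrightarrow> (\<forall>i\<in>nodes n. in_cycle n E chi k i)"

definition psi :: "nat \<Rightarrow> nat \<Rightarrow> int" where
  "psi n k = (if int k \<le> \<lceil>real n / 2\<rceil> - 1 then int n else int n - int k)"

end

theory Submission
  imports Defs
begin

text \<open>Going backwards in time from node i at time k < n, one collects a set B of nodes whose
  earlier knowledge has flowed into K_i(k), adding one node per time step: at time t, any node of
  B lies on an input-cord of at least n - t - 1 \<ge> |B| other nodes, so the cord leaves B and some
  edge of G(t) enters B from outside. Hence |K_i(k)| \<ge> k + 1 for k < n, while |K_i(k)| \<le> n always.\<close>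

lemma know_subset_image:
  assumes "\<And>k. E k \<subseteq> nodes n \<times> nodes n" and "i \<in> nodes n"
  shows "know E d k i \<subseteq> d ` nodes n"
  using assms(2)
proof (induction k arbitrary: i)
  case 0
  then show ?case by simp
next
  case (Suc k)
  have "\<And>j. (j, i) \<in> E k \<Longrightarrow> j \<in> nodes n" using assms(1) by blast
  with Suc show ?case by auto
qed

lemma finite_know:
  assumes "\<And>k. E k \<subseteq> nodes n \<times> nodes n" and "i \<in> nodes n"
  shows "finite (know E d k i)"
  using know_subset_image[OF assms] by (rule finite_subset) (simp add: nodes_def)

lemma card_know_le:
  assumes "\<And>k. E k \<subseteq> nodes n \<times> nodes n" and "i \<in> nodes n"
  shows "card (know E d k i) \<le> n"
proof -
  have "card (know E d k i) \<le> card (d ` nodes n)"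
    using know_subset_image[OF assms] by (rule card_mono[rotated]) (simp add: nodes_def)
  also have "\<dots> \<le> n" using card_image_le[of "nodes n" d] by (simp add: nodes_def)
  finally show ?thesis .
qed

lemma know_mono:
  assumes "k \<le> k'"
  shows "know E d k j \<subseteq> know E d k' j"
  using assms by (induction k' rule: dec_induct) auto

lemma know_edge:
  assumes "(u, v) \<in> E k"
  shows "know E d k u \<subseteq> know E d (Suc k) v"
  using assms by auto

lemma chain_enters_set:
  assumes chain: "\<forall>j. Suc j < length xs \<longrightarrow> (xs ! j, xs ! Suc j) \<in> R"
    and last: "(last xs, y) \<in> R" and "y \<in> B"
    and out: "x \<in> set xs" "x \<notin> B"
  shows "\<exists>u\<in>set xs. \<exists>v. (u, v) \<in> R \<and> u \<notin> B \<and> v \<in> B"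
proof -
  define J where "J = {j. j < length xs \<and> xs ! j \<notin> B}"
  have "finite J" and "J \<noteq> {}" using out by (auto simp: J_def in_set_conv_nth)
  then have "Max J \<in> J" and max: "\<And>j. j \<in> J \<Longrightarrow> j \<le> Max J" by auto
  then have j: "Max J < length xs" "xs ! Max J \<notin> B" by (auto simp: J_def)
  show ?thesis
  proof (cases "Suc (Max J) < length xs")
    case True
    have "Suc (Max J) \<notin> J" using max by fastforce
    with True have "xs ! Suc (Max J) \<in> B" by (simp add: J_def)
    with True j chain show ?thesis by (metis nth_mem)
  next
    case False
    with j(1) have "xs \<noteq> []" "Max J = length xs - 1" by auto
    then have "xs ! Max J = last xs" by (simp add: last_conv_nth)
    with j last \<open>y \<in> B\<close> show ?thesis by (metis nth_mem)
  qed
qed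

lemma input_cord_enters_set:
  assumes cord: "input_cord n E k v cs" and "v \<in> B" "finite B" "card B \<le> length cs"
  shows "\<exists>u\<in>nodes n. \<exists>w. (u, w) \<in> E k \<and> u \<notin> B \<and> w \<in> B"
proof -
  have cs: "distinct cs" "set cs \<subseteq> nodes n - {v}"
    "\<forall>j. Suc j < length cs \<longrightarrow> (cs ! j, cs ! Suc j) \<in> E k" "(last cs, v) \<in> E k"
    using cord by (auto simp: input_cord_def)
  have "\<not> set cs \<subseteq> B"
  proof
    assume "set cs \<subseteq> B"
    with \<open>v \<in> B\<close> have "card (insert v (set cs)) \<le> card B"
      using \<open>finite B\<close> by (intro card_mono) auto
    moreover have "v \<notin> set cs" using cs(2) by blast
    then have "card (insert v (set cs)) = Suc (length cs)" by (simp add: cs(1) distinct_card)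
    ultimately show False using \<open>card B \<le> length cs\<close> by simp
  qed
  then obtain x where "x \<in> set cs" "x \<notin> B" by blast
  from chain_enters_set[OF cs(3,4) \<open>v \<in> B\<close> this] cs(2) show ?thesis by blast
qed

lemma contains_cycle_enters_set:
  assumes "contains_cycle n E chi k" and "B \<subseteq> nodes n" "B \<noteq> {}" "int (card B) < chi"
  shows "\<exists>u\<in>nodes n. \<exists>w. (u, w) \<in> E k \<and> u \<notin> B \<and> w \<in> B"
proof -
  obtain v where "v \<in> B" using \<open>B \<noteq> {}\<close> by blast
  with assms(1,2) obtain cs where "closed_input_cord n E k v cs" "int (length cs) > chi - 2"
    by (auto simp: contains_cycle_def in_cycle_def)
  then have "input_cord n E k v cs" "card B \<le> length cs"
    using \<open>int (card B) < chi\<close> by (auto simp: closed_input_cord_def)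
  moreover have "finite B" using \<open>B \<subseteq> nodes n\<close> finite_subset by (auto simp: nodes_def)
  ultimately show ?thesis using input_cord_enters_set \<open>v \<in> B\<close> by blast
qed

lemma contains_cycle_mono:
  assumes "contains_cycle n E chi' k" and "chi \<le> chi'"
  shows "contains_cycle n E chi k"
  using assms by (fastforce simp: contains_cycle_def in_cycle_def)

lemma psi_ge: "int n - int k \<le> psi n k"
  by (simp add: psi_def)

lemma know_influencers:
  assumes cyc: "\<And>t. t < k \<Longrightarrow> contains_cycle n E (int n - int t) t"
    and "k < n" "i \<in> nodes n" "s \<le> k"
  shows "\<exists>B\<subseteq>nodes n. card B = Suc s \<and> (\<forall>j\<in>B. know E d (k - s) j \<subseteq> know E d k i)"
  using \<open>s \<le> k\<close>
proof (induction s)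
  case 0
  with \<open>i \<in> nodes n\<close> show ?case by (intro exI[of _ "{i}"]) auto
next
  case (Suc s)
  then obtain B where B: "B \<subseteq> nodes n" "card B = Suc s"
    and flow: "\<forall>j\<in>B. know E d (k - s) j \<subseteq> know E d k i" by auto
  define t where "t = k - Suc s"
  have t: "Suc t = k - s" "t < k" using Suc.prems by (auto simp: t_def)
  have "B \<noteq> {}" "int (card B) < int n - int t" using B(2) \<open>k < n\<close> t by auto
  with cyc[OF t(2)] B(1) obtain u w where u: "u \<in> nodes n" "u \<notin> B"
    and uw: "(u, w) \<in> E t" "w \<in> B"
    using contains_cycle_enters_set by blast
  have "know E d t u \<subseteq> know E d k i"
    using know_edge[of u w E t d, OF uw(1)] flow uw(2) t(1) by auto
  moreover have "\<forall>j\<in>B. know E d t j \<subseteq> know E d k i"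
    using flow unfolding t(1)[symmetric] by auto
  moreover have "card (insert u B) = Suc (Suc s)"
    using B finite_subset u(2) by (fastforce simp: nodes_def)
  ultimately show ?case using B(1) u(1) by (intro exI[of _ "insert u B"]) (auto simp: t_def)
qed

lemma card_know_lower:
  assumes "\<And>k. E k \<subseteq> nodes n \<times> nodes n" and "inj_on d (nodes n)"
    and "\<And>t. t < k \<Longrightarrow> contains_cycle n E (int n - int t) t"
    and "k < n" "i \<in> nodes n"
  shows "k < card (know E d k i)"
proof -
  obtain B where B: "B \<subseteq> nodes n" "card B = Suc k" "\<forall>j\<in>B. know E d 0 j \<subseteq> know E d k i"
    using know_influencers[OF assms(3-5), of k d] by auto
  have "card B = card (d ` B)" using assms(2) B(1) by (simp add: card_image inj_on_subset)
  also have "\<dots> \<le> card (know E d k i)"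
    using B(3) finite_know[OF assms(1,5)] by (intro card_mono) auto
  finally show ?thesis using B(2) by simp
qed

theorem corollary1:
  fixes n :: nat and E :: "nat \<Rightarrow> (nat \<times> nat) set" and d :: "nat \<Rightarrow> real"
  assumes "n \<ge> 2"
    and "\<And>k. E k \<subseteq> nodes n \<times> nodes n"
    and "inj_on d (nodes n)"
    and "\<And>k. k \<le> n - 2 \<Longrightarrow> contains_cycle n E (psi n k) k"
  shows "\<forall>i\<in>nodes n. card (know E d n i) = n \<and> (LEAST k. card (know E d k i) \<le> k) = n"
proof
  fix i assume i: "i \<in> nodes n"
  have cyc: "contains_cycle n E (int n - int t) t" if "t < n - 1" for t
    using that contains_cycle_mono[OF assms(4) psi_ge] by simp
  have lower: "k < card (know E d k i)" if "k < n" for k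
    using that by (intro card_know_lower[OF assms(2,3) cyc _ i]) auto
  have "n \<le> card (know E d (n - 1) i)" using lower[of "n - 1"] assms(1) by simp
  also have "\<dots> \<le> card (know E d n i)"
    by (intro card_mono finite_know[OF assms(2) i] know_mono) simp
  finally have "n \<le> card (know E d n i)" .
  then have card: "card (know E d n i) = n" using card_know_le[of E n, OF assms(2) i, of d n] by simp
  moreover have "(LEAST k. card (know E d k i) \<le> k) = n"
    using card lower by (intro Least_equality) (auto simp: not_le[symmetric])
  ultimately show "card (know E d n i) = n \<and> (LEAST k. card (know E d k i) \<le> k) = n" ..
qed

end
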